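(* Let $\mathcal{C}_1$ and $\mathcal{C}_2$ be binary linear codes with parameters $(n_1,k_1,d_1)$ and $(n_2,k_2,d_2)$, respectively. Then $\mathcal{C}_3 = \{(u,v) : u \in \mathcal{C}_1,\ v\in \mathcal{C}_2\}$ is an $(n_1+n_2,\,k_1+k_2,\,\min\{d_1,d_2\})$ code with $$\rho(\mathcal{C}_3) \le \rho(\mathcal{C}_1) + \rho(\mathcal{C}_2).$$
   Context: An $(n,k,d)$ code is a linear code of length $n$, dimension $k$ and minimum Hamming distance $d$. A parity-check matrix for a linear code $\mathcal{C}$ is any matrix (possibly with linearly dependent rows) whose rows span $\mathcal{C}^\perp$. For a parity-check matrix $H$, the stopping distance $s(H)$ is the largest integer such that for every set of $s(H)-1$ or fewer columns of $H$, the projection of $H$ onto those columns contains at least one row of Hamming weight exactly one. The stopping redundancy $\rho(\mathcal{C})$ is the smallest number of rows of a parity-check matrix $H$ for $\mathcal{C}$ with $s(H) = d(\mathcal{C})$, the minimum distance of $\mathcal{C}$. *)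

theory Defs
  imports Main
begin

text \<open>Binary vectors of length n are boolean lists of length n
 (True = 1, False = 0). Addition over GF(2) is componentwise xor.\<close>

definition vec_add :: "bool list \<Rightarrow> bool list \<Rightarrow> bool list" where
  "vec_add u v = map2 (\<noteq>) u v"

definition zero_vec :: "nat \<Rightarrow> bool list" where
  "zero_vec n = replicate n False"

definition weight :: "bool list \<Rightarrow> nat" where
  "weight u = card {i. i < length u \<and> u ! i}"

definition inner_gf2 :: "bool list \<Rightarrow> bool list \<Rightarrow> bool" where
  "inner_gf2 u v = odd (card {i. i < length u \<and> u ! i \<and> v ! i})"

definition linear_code :: "nat \<Rightarrow> bool list set \<Rightarrow> bool" where
  "linear_code n C \<longleftrightarrow> C \<subseteq> {u. length u = n} \<and> zero_vec n \<in> C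
     \<and> (\<forall>u\<in>C. \<forall>v\<in>C. vec_add u v \<in> C)"

definition dual_code :: "nat \<Rightarrow> bool list set \<Rightarrow> bool list set" where
  "dual_code n C = {v. length v = n \<and> (\<forall>u\<in>C. \<not> inner_gf2 u v)}"

inductive_set row_span :: "nat \<Rightarrow> bool list list \<Rightarrow> bool list set"
  for n :: nat and H :: "bool list list" where
  zero: "zero_vec n \<in> row_span n H"
| add: "r \<in> set H \<Longrightarrow> v \<in> row_span n H \<Longrightarrow> vec_add r v \<in> row_span n H"

text \<open>Minimum distance of a linear code = minimum weight of a nonzero codeword.\<close>
definition min_dist :: "bool list set \<Rightarrow> nat" where
  "min_dist C = Min {weight u | u. u \<in> C \<and> True \<in> set u}"

text \<open>An (n,k,d) binary linear code (with d its minimum distance, so the code is nonzero).\<close>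
definition is_code :: "nat \<Rightarrow> nat \<Rightarrow> nat \<Rightarrow> bool list set \<Rightarrow> bool" where
  "is_code n k d C \<longleftrightarrow> linear_code n C \<and> card C = 2 ^ k
     \<and> (\<exists>u\<in>C. True \<in> set u) \<and> d = min_dist C"

text \<open>A parity-check matrix (rows possibly dependent) whose rows span the dual code.\<close>
definition parity_check :: "nat \<Rightarrow> bool list set \<Rightarrow> bool list list \<Rightarrow> bool" where
  "parity_check n C H \<longleftrightarrow> (\<forall>h\<in>set H. length h = n) \<and> row_span n H = dual_code n C"

definition stopping_ok :: "nat \<Rightarrow> bool list list \<Rightarrow> nat \<Rightarrow> bool" where
  "stopping_ok n H s \<longleftrightarrow> (\<forall>S. S \<subseteq> {..<n} \<and> S \<noteq> {} \<and> card S < s \<longrightarrow>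
       (\<exists>h\<in>set H. card {i\<in>S. h ! i} = 1))"

definition stopping_distance :: "nat \<Rightarrow> bool list list \<Rightarrow> nat" where
  "stopping_distance n H = (GREATEST s. stopping_ok n H s)"

definition stopping_redundancy :: "nat \<Rightarrow> bool list set \<Rightarrow> nat" where
  "stopping_redundancy n C = (LEAST m. \<exists>H. length H = m \<and> parity_check n C H
      \<and> stopping_distance n H = min_dist C)"

end

theory Submission
  imports Defs
begin

text \<open>Take parity-check matrices \<open>H\<^sub>1\<close>, \<open>H\<^sub>2\<close> of minimal length whose stopping distances equal
  \<open>d\<^sub>1\<close>, \<open>d\<^sub>2\<close>. The block-diagonal matrix \<open>diag(H\<^sub>1, H\<^sub>2)\<close> is a parity-check matrix of the direct
  sum, whose dual is the direct sum of the duals. A set of fewer than \<open>min d\<^sub>1 d\<^sub>2\<close> columns either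
  meets the first block, where a row of \<open>H\<^sub>1\<close> has weight one on it, or lies in the second block,
  where a row of \<open>H\<^sub>2\<close> does. As a stopping distance never exceeds the minimum distance, the
  stopping distance of \<open>diag(H\<^sub>1, H\<^sub>2)\<close> is exactly \<open>min d\<^sub>1 d\<^sub>2\<close>.

  That the minimal matrices exist rests on double duality \<open>C\<^sup>\<bottom>\<^sup>\<bottom> = C\<close>: on fewer than \<open>d\<close>
  coordinates the dual code projects onto the whole space, so the matrix of all dual codewords
  has stopping distance \<open>d\<close>.\<close>

section \<open>Vectors over GF(2)\<close>

fun gf2_dot :: "bool list \<Rightarrow> bool list \<Rightarrow> bool" where
  "gf2_dot (a # u) (b # v) = ((a \<and> b) \<noteq> gf2_dot u v)"
| "gf2_dot _ _ = False"

lemma gf2_dot_eq_odd_length_filter: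
  "gf2_dot u v = odd (length (filter (\<lambda>(a, b). a \<and> b) (zip u v)))"
  by (induction u v rule: gf2_dot.induct) auto

lemma inner_gf2_eq_gf2_dot:
  assumes "length u = length v"
  shows "inner_gf2 u v = gf2_dot u v"
proof -
  have "{i. i < length u \<and> u ! i \<and> v ! i}
      = {i. i < length (zip u v) \<and> (\<lambda>(a, b). a \<and> b) (zip u v ! i)}"
    using assms by auto
  then show ?thesis
    unfolding inner_gf2_def gf2_dot_eq_odd_length_filter length_filter_conv_card by simp
qed

lemma gf2_dot_commute: "gf2_dot u v = gf2_dot v u"
  by (induction u v rule: gf2_dot.induct) auto

lemma length_vec_add [simp]: "length (vec_add u v) = min (length u) (length v)"
  by (simp add: vec_add_def)

lemma vec_add_Cons [simp]: "vec_add (a # u) (b # v) = (a \<noteq> b) # vec_add u v"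
  by (simp add: vec_add_def)

lemma vec_add_append:
  "length u = length a \<Longrightarrow> vec_add (u @ w) (a @ b) = vec_add u a @ vec_add w b"
  by (simp add: vec_add_def)

lemma vec_add_commute: "vec_add u v = vec_add v u"
  by (auto simp: vec_add_def zip_commute[of u v] intro: map_cong)

lemma vec_add_assoc: "vec_add (vec_add a b) c = vec_add a (vec_add b c)"
proof (induction a arbitrary: b c)
  case (Cons x a)
  then show ?case by (cases b; cases c) (auto simp: vec_add_def)
qed (simp add: vec_add_def)

lemma vec_add_cancel_left: "length a = length b \<Longrightarrow> vec_add a (vec_add a b) = b"
  by (induction a b rule: list_induct2) (auto simp: vec_add_def)

lemma length_zero_vec [simp]: "length (zero_vec n) = n"
  by (simp add: zero_vec_def)

lemma zero_vec_Suc: "zero_vec (Suc n) = False # zero_vec n"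
  by (simp add: zero_vec_def)

lemma zero_vec_add: "zero_vec (m + n) = zero_vec m @ zero_vec n"
  by (simp add: zero_vec_def replicate_add)

lemma vec_add_zero_vec_left [simp]: "length a = n \<Longrightarrow> vec_add (zero_vec n) a = a"
  by (induction a arbitrary: n) (auto simp: zero_vec_def vec_add_def)

lemma vec_add_zero_vec_right [simp]: "length a = n \<Longrightarrow> vec_add a (zero_vec n) = a"
  by (induction a arbitrary: n) (auto simp: zero_vec_def vec_add_def)

lemma gf2_dot_vec_add_left:
  "length a = length c \<Longrightarrow> length b = length c \<Longrightarrow>
    gf2_dot (vec_add a b) c = (gf2_dot a c \<noteq> gf2_dot b c)"
proof (induction a c arbitrary: b rule: list_induct2)
  case (Cons x a z c)
  then show ?case by (cases b) auto
qed simp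

lemma gf2_dot_vec_add_right:
  "length a = length c \<Longrightarrow> length b = length c \<Longrightarrow>
    gf2_dot c (vec_add a b) = (gf2_dot c a \<noteq> gf2_dot c b)"
  by (metis gf2_dot_commute gf2_dot_vec_add_left)

lemma gf2_dot_zero_vec_right [simp]: "gf2_dot u (zero_vec n) = False"
proof (induction u arbitrary: n)
  case (Cons a u)
  then show ?case by (cases n) (auto simp: zero_vec_def)
qed simp

lemma gf2_dot_zero_vec_left [simp]: "gf2_dot (zero_vec n) u = False"
  by (metis gf2_dot_commute gf2_dot_zero_vec_right)

lemma gf2_dot_append:
  "length u = length a \<Longrightarrow> gf2_dot (u @ w) (a @ b) = (gf2_dot u a \<noteq> gf2_dot w b)"
  by (induction u a rule: list_induct2) auto

lemma weight_eq_length_filter: "weight u = length (filter id u)"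
  by (simp add: weight_def length_filter_conv_card)

lemma weight_append: "weight (u @ v) = weight u + weight v"
  by (simp add: weight_eq_length_filter)

lemma weight_zero_vec [simp]: "weight (zero_vec n) = 0"
  by (simp add: weight_eq_length_filter zero_vec_def)

lemma finite_length_eq: "finite {u :: bool list. length u = n}"
  using finite_lists_length_eq[of "UNIV :: bool set" n] by simp

section \<open>Linear codes and their duals\<close>

lemma linear_codeD:
  assumes "linear_code n C"
  shows "C \<subseteq> {u. length u = n}" and "zero_vec n \<in> C"
    and "u \<in> C \<Longrightarrow> v \<in> C \<Longrightarrow> vec_add u v \<in> C"
  using assms by (auto simp: linear_code_def)

lemma linear_code_finite: "linear_code n C \<Longrightarrow> finite C"
  by (rule finite_subset[OF linear_codeD(1) finite_length_eq])

lemma dual_code_subset: "dual_code n C \<subseteq> {v. length v = n}"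
  by (auto simp: dual_code_def)

lemma mem_dual_code_iff:
  assumes "C \<subseteq> {u. length u = n}"
  shows "v \<in> dual_code n C \<longleftrightarrow> length v = n \<and> (\<forall>u\<in>C. \<not> gf2_dot u v)"
  using assms by (auto simp: dual_code_def inner_gf2_eq_gf2_dot subset_iff)

lemma linear_code_dual_code:
  assumes "C \<subseteq> {u. length u = n}"
  shows "linear_code n (dual_code n C)"
  unfolding linear_code_def
proof (intro conjI ballI)
  show "dual_code n C \<subseteq> {v. length v = n}" by (rule dual_code_subset)
  show "zero_vec n \<in> dual_code n C" by (simp add: mem_dual_code_iff[OF assms])
  fix a b assume "a \<in> dual_code n C" "b \<in> dual_code n C"
  then show "vec_add a b \<in> dual_code n C"
    using assms by (auto simp: mem_dual_code_iff gf2_dot_vec_add_right subset_iff)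
qed

definition shorten :: "bool list set \<Rightarrow> bool list set" where
  "shorten C = {u. False # u \<in> C}"

lemma linear_code_shorten: "linear_code (Suc n) C \<Longrightarrow> linear_code n (shorten C)"
  unfolding linear_code_def shorten_def by (force simp: zero_vec_Suc)

lemma dual_code_shorten_extend:
  assumes lin: "linear_code (Suc n) C" and w: "True # w \<in> C"
    and v: "v \<in> dual_code n (shorten C)"
  shows "gf2_dot w v # v \<in> dual_code (Suc n) C"
proof -
  have C_len: "C \<subseteq> {u. length u = Suc n}" using linear_codeD(1)[OF lin] .
  have shorten_len: "shorten C \<subseteq> {u. length u = n}"
    using linear_codeD(1)[OF linear_code_shorten[OF lin]] .
  have lw: "length w = n" using w C_len by auto
  have lv: "length v = n" and v_orth: "\<forall>u\<in>shorten C. \<not> gf2_dot u v"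
    using v mem_dual_code_iff[OF shorten_len] by auto
  have "\<not> gf2_dot u (gf2_dot w v # v)" if u: "u \<in> C" for u
  proof -
    obtain a u' where u_eq: "u = a # u'" and lu': "length u' = n"
      using u C_len by (cases u) auto
    show ?thesis
    proof (cases a)
      case True
      have "vec_add (True # w) u \<in> C" using linear_codeD(3)[OF lin w u] .
      then have "vec_add w u' \<in> shorten C" using u_eq True by (simp add: shorten_def)
      then show ?thesis
        using v_orth gf2_dot_vec_add_left[of w v u'] lw lv lu' u_eq True by auto
    next
      case False
      then show ?thesis using u u_eq v_orth by (simp add: shorten_def)
    qed
  qed
  then show ?thesis using mem_dual_code_iff[OF C_len] lv by simp
qed

lemma dual_code_shorten_Cons:
  assumes C_len: "C \<subseteq> {u. length u = Suc n}" and no_True: "\<nexists>w. True # w \<in> C"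
    and v: "v \<in> dual_code n (shorten C)"
  shows "b # v \<in> dual_code (Suc n) C"
proof -
  have shorten_len: "shorten C \<subseteq> {u. length u = n}"
    using C_len by (auto simp: shorten_def)
  have lv: "length v = n" and v_orth: "\<forall>u\<in>shorten C. \<not> gf2_dot u v"
    using v mem_dual_code_iff[OF shorten_len] by auto
  have "\<not> gf2_dot u (b # v)" if u: "u \<in> C" for u
  proof -
    obtain a u' where u_eq: "u = a # u'" using u C_len by (cases u) auto
    with u no_True have "\<not> a" by (cases a) auto
    with u u_eq have "u' \<in> shorten C" by (simp add: shorten_def)
    then show ?thesis using v_orth u_eq \<open>\<not> a\<close> by simp
  qed
  then show ?thesis using mem_dual_code_iff[OF C_len] lv by simp
qed

lemma translate_notin_shorten:
  assumes lin: "linear_code (Suc n) C" and w: "True # w \<in> C"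
    and x: "b # x \<notin> C" and lx: "length x = n"
  shows "(if b then vec_add x w else x) \<notin> shorten C"
proof
  have lw: "length w = n" using w linear_codeD(1)[OF lin] by auto
  let ?x = "if b then vec_add x w else x"
  assume "?x \<in> shorten C"
  then have "vec_add (if b then True # w else zero_vec (Suc n)) (False # ?x) \<in> C"
    using linear_codeD(2,3)[OF lin] w by (simp add: shorten_def)
  moreover have "vec_add (if b then True # w else zero_vec (Suc n)) (False # ?x) = b # x"
    using lx lw by (simp add: zero_vec_Suc vec_add_commute[of x w] vec_add_cancel_left)
  ultimately show False using x by simp
qed

text \<open>Separation by induction on the length: if some codeword starts with a one, the first
  coordinate of the separating vector is forced by orthogonality to it; otherwise the first
  coordinate is free.\<close>

lemma linear_code_separation:
  assumes "linear_code n C" and "length x = n" and "x \<notin> C"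
  shows "\<exists>v\<in>dual_code n C. gf2_dot x v"
  using assms
proof (induction n arbitrary: C x)
  case 0
  then show ?case using linear_codeD(2)[OF "0.prems"(1)] by (simp add: zero_vec_def)
next
  case (Suc n)
  have lin: "linear_code (Suc n) C" and x_notin: "x \<notin> C" by fact+
  obtain b x' where x_eq: "x = b # x'" and lx': "length x' = n"
    using Suc.prems(2) by (cases x) auto
  have C_len: "C \<subseteq> {u. length u = Suc n}" using linear_codeD(1)[OF lin] .
  note IH = Suc.IH[OF linear_code_shorten[OF lin]]
  show ?case
  proof (cases "\<exists>w. True # w \<in> C")
    case True
    then obtain w where w: "True # w \<in> C" by blast
    have lw: "length w = n" using w C_len by auto
    define x'' where "x'' = (if b then vec_add x' w else x')"
    have "x'' \<notin> shorten C"
      unfolding x''_def using translate_notin_shorten[OF lin w _ lx'] x_notin x_eq by blast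
    moreover have "length x'' = n" using lx' lw by (simp add: x''_def)
    ultimately obtain v' where v': "v' \<in> dual_code n (shorten C)" and x''_v': "gf2_dot x'' v'"
      using IH by blast
    have "length v' = n" using v' dual_code_subset by blast
    then have "gf2_dot x (gf2_dot w v' # v') = gf2_dot x'' v'"
      using x_eq lx' lw by (auto simp: x''_def gf2_dot_vec_add_left)
    then show ?thesis
      using dual_code_shorten_extend[OF lin w v'] x''_v' by blast
  next
    case no_True: False
    show ?thesis
    proof (cases b)
      case True
      have "zero_vec n \<in> dual_code n (shorten C)"
        using linear_codeD(2)[OF linear_code_dual_code[OF linear_codeD(1)]]
          linear_code_shorten[OF lin] by blast
      then have "True # zero_vec n \<in> dual_code (Suc n) C"
        by (rule dual_code_shorten_Cons[OF C_len no_True])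
      then show ?thesis using x_eq True by (intro bexI[of _ "True # zero_vec n"]) auto
    next
      case False
      then have "x' \<notin> shorten C" using x_notin x_eq by (simp add: shorten_def)
      then obtain v' where v': "v' \<in> dual_code n (shorten C)" and "gf2_dot x' v'"
        using IH lx' by blast
      moreover have "False # v' \<in> dual_code (Suc n) C"
        using dual_code_shorten_Cons[OF C_len no_True v'] .
      ultimately show ?thesis using x_eq False by (intro bexI[of _ "False # v'"]) auto
    qed
  qed
qed

lemma dual_dual_code:
  assumes lin: "linear_code n C"
  shows "dual_code n (dual_code n C) = C"
proof
  have C_len: "C \<subseteq> {u. length u = n}" using linear_codeD(1)[OF lin] .
  show "C \<subseteq> dual_code n (dual_code n C)"
  proof
    fix u assume u: "u \<in> C"
    then have "\<forall>v\<in>dual_code n C. \<not> gf2_dot v u"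
      using mem_dual_code_iff[OF C_len] gf2_dot_commute by blast
    then show "u \<in> dual_code n (dual_code n C)"
      using u C_len by (auto simp: mem_dual_code_iff[OF dual_code_subset])
  qed
  show "dual_code n (dual_code n C) \<subseteq> C"
  proof
    fix x assume x: "x \<in> dual_code n (dual_code n C)"
    show "x \<in> C"
    proof (rule ccontr)
      assume "x \<notin> C"
      then obtain v where "v \<in> dual_code n C" and "gf2_dot x v"
        using linear_code_separation[OF lin] x dual_code_subset by blast
      then show False
        using x by (auto simp: mem_dual_code_iff[OF dual_code_subset] gf2_dot_commute)
    qed
  qed
qed

lemma min_dist_le_weight:
  assumes "finite C" and "c \<in> C" and "True \<in> set c"
  shows "min_dist C \<le> weight c"
  unfolding min_dist_def using assms by (intro Min_le) auto

lemma min_dist_attained: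
  assumes "finite C" and "\<exists>u\<in>C. True \<in> set u"
  obtains c where "c \<in> C" and "True \<in> set c" and "weight c = min_dist C"
proof -
  have "min_dist C \<in> {weight u | u. u \<in> C \<and> True \<in> set u}"
    unfolding min_dist_def using assms by (intro Min_in) auto
  then show ?thesis using that by auto
qed

lemma min_dist_eqI:
  assumes "finite C" and "c \<in> C" and "True \<in> set c" and "weight c = d"
    and "\<And>u. u \<in> C \<Longrightarrow> True \<in> set u \<Longrightarrow> d \<le> weight u"
  shows "min_dist C = d"
  unfolding min_dist_def using assms by (intro Min_eqI) auto

definition restrict_vec :: "nat set \<Rightarrow> bool list \<Rightarrow> bool list" where
  "restrict_vec S v = map (\<lambda>i. v ! i \<and> i \<in> S) [0..<length v]"

lemma length_restrict_vec [simp]: "length (restrict_vec S v) = length v"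
  by (simp add: restrict_vec_def)

lemma nth_restrict_vec [simp]: "i < length v \<Longrightarrow> restrict_vec S v ! i = (v ! i \<and> i \<in> S)"
  by (simp add: restrict_vec_def)

lemma restrict_vec_vec_add:
  "length a = length b \<Longrightarrow>
    restrict_vec S (vec_add a b) = vec_add (restrict_vec S a) (restrict_vec S b)"
  by (rule nth_equalityI) (auto simp: vec_add_def)

lemma restrict_vec_zero_vec: "restrict_vec S (zero_vec n) = zero_vec n"
  by (rule nth_equalityI) (auto simp: zero_vec_def)

lemma restrict_vec_id:
  "(\<And>i. i < length v \<Longrightarrow> v ! i \<Longrightarrow> i \<in> S) \<Longrightarrow> restrict_vec S v = v"
  by (rule nth_equalityI) auto

lemma gf2_dot_restrict_vec:
  "length a = length b \<Longrightarrow> gf2_dot (restrict_vec S a) b = gf2_dot a (restrict_vec S b)"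
proof -
  assume l: "length a = length b"
  have "{i. i < length (restrict_vec S a) \<and> restrict_vec S a ! i \<and> b ! i}
      = {i. i < length a \<and> a ! i \<and> restrict_vec S b ! i}"
    using l by auto
  then show ?thesis using l by (simp add: inner_gf2_def inner_gf2_eq_gf2_dot[symmetric])
qed

lemma weight_restrict_vec_le: "finite S \<Longrightarrow> weight (restrict_vec S v) \<le> card S"
proof -
  have "{i. i < length (restrict_vec S v) \<and> restrict_vec S v ! i} \<subseteq> S"
    by (auto simp: restrict_vec_def)
  then show "finite S \<Longrightarrow> ?thesis" unfolding weight_def by (rule card_mono[rotated])
qed

lemma linear_code_restrict_vec_image: "linear_code n C \<Longrightarrow> linear_code n (restrict_vec S ` C)"
  unfolding linear_code_def
  by (force simp: restrict_vec_zero_vec subset_iff image_iff restrict_vec_vec_add[symmetric])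

lemma gf2_dot_imp_True_in_set: "gf2_dot u v \<Longrightarrow> True \<in> set v"
  by (induction u v rule: gf2_dot.induct) auto

text \<open>Otherwise a vector separating \<open>z\<close> from the restricted dual code, itself restricted to
  \<open>S\<close>, would be a nonzero codeword of weight at most \<open>card S\<close>.\<close>

lemma restrict_vec_dual_code_surj:
  assumes lin: "linear_code n C" and S: "S \<subseteq> {..<n}" and card_S: "card S < min_dist C"
    and lz: "length z = n" and supp_z: "\<And>i. i < n \<Longrightarrow> z ! i \<Longrightarrow> i \<in> S"
  shows "z \<in> restrict_vec S ` dual_code n C"
proof (rule ccontr)
  let ?W = "restrict_vec S ` dual_code n C"
  assume "z \<notin> ?W"
  moreover have lin_W: "linear_code n ?W"
    using linear_code_restrict_vec_image[OF linear_code_dual_code[OF linear_codeD(1)[OF lin]]] .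
  ultimately obtain y where y: "y \<in> dual_code n ?W" and z_y: "gf2_dot z y"
    using linear_code_separation lz by blast
  have ly: "length y = n" using y dual_code_subset by blast
  define x where "x = restrict_vec S y"
  have "x \<in> dual_code n (dual_code n C)"
    unfolding mem_dual_code_iff[OF dual_code_subset]
  proof (intro conjI ballI)
    show "length x = n" using ly by (simp add: x_def)
    fix v assume v: "v \<in> dual_code n C"
    then have "length v = n" using dual_code_subset by blast
    then have "gf2_dot v x = gf2_dot (restrict_vec S v) y"
      using ly by (simp add: x_def gf2_dot_restrict_vec)
    then show "\<not> gf2_dot v x"
      using y v linear_codeD(1)[OF lin_W] by (auto simp: mem_dual_code_iff)
  qed
  then have x_in_C: "x \<in> C" using dual_dual_code[OF lin] by simp
  have "gf2_dot z x = gf2_dot z y"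
    using lz ly supp_z gf2_dot_restrict_vec[of z y S] restrict_vec_id[of z S] by (simp add: x_def)
  then have "True \<in> set x" using z_y gf2_dot_imp_True_in_set by blast
  then have "min_dist C \<le> weight x"
    using min_dist_le_weight[OF linear_code_finite[OF lin] x_in_C] by blast
  moreover have "weight x \<le> card S"
    unfolding x_def using finite_subset[OF S finite_lessThan] by (rule weight_restrict_vec_le)
  ultimately show False using card_S by simp
qed

section \<open>Parity-check matrices and stopping distance\<close>

lemma row_span_length:
  assumes "v \<in> row_span n H" and "\<And>h. h \<in> set H \<Longrightarrow> length h = n"
  shows "length v = n"
  using assms by induction auto

lemma set_subset_row_span:
  assumes "\<And>h. h \<in> set H \<Longrightarrow> length h = n"
  shows "set H \<subseteq> row_span n H"
proof
  fix h assume h: "h \<in> set H"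
  then have "vec_add h (zero_vec n) \<in> row_span n H" by (rule row_span.add[OF _ row_span.zero])
  then show "h \<in> row_span n H" using h assms by simp
qed

lemma linear_code_row_span:
  assumes len: "\<And>h. h \<in> set H \<Longrightarrow> length h = n"
  shows "linear_code n (row_span n H)"
  unfolding linear_code_def
proof (intro conjI ballI)
  show "row_span n H \<subseteq> {u. length u = n}" using row_span_length len by blast
  show "zero_vec n \<in> row_span n H" by (rule row_span.zero)
  fix u v assume "u \<in> row_span n H" and v: "v \<in> row_span n H"
  then show "vec_add u v \<in> row_span n H"
  proof induction
    case zero
    then show ?case using row_span_length[OF v len] by simp
  next
    case (add r u)
    then show ?case by (simp add: vec_add_assoc row_span.add)
  qed
qed

lemma row_span_subset:
  assumes "linear_code n V" and "set H \<subseteq> V"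
  shows "row_span n H \<subseteq> V"
proof
  fix v assume "v \<in> row_span n H"
  then show "v \<in> V"
    by induction (use assms linear_codeD(2,3)[OF assms(1)] in auto)
qed

lemma parity_check_rows_in_dual_code:
  "parity_check n C H \<Longrightarrow> set H \<subseteq> dual_code n C"
  unfolding parity_check_def using set_subset_row_span by blast

lemma parity_check_of_dual_code:
  assumes "linear_code n C" and "set H = dual_code n C"
  shows "parity_check n C H"
  unfolding parity_check_def
proof
  have lin_dual: "linear_code n (dual_code n C)"
    using linear_code_dual_code[OF linear_codeD(1)[OF assms(1)]] .
  show len_H: "\<forall>h\<in>set H. length h = n" using assms(2) dual_code_subset by blast
  show "row_span n H = dual_code n C"
    using row_span_subset[OF lin_dual] set_subset_row_span[of H n] len_H assms(2) by auto
qed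

lemma stopping_ok_antimono: "stopping_ok n H s \<Longrightarrow> t \<le> s \<Longrightarrow> stopping_ok n H t"
  unfolding stopping_ok_def by auto

text \<open>The support of a minimum-weight codeword is a stopping set: it meets every row of a
  parity-check matrix in an even number of coordinates.\<close>

lemma stopping_ok_le_min_dist:
  assumes H: "parity_check n C H" and lin: "linear_code n C"
    and nonzero: "\<exists>u\<in>C. True \<in> set u" and stop: "stopping_ok n H s"
  shows "s \<le> min_dist C"
proof (rule ccontr)
  assume "\<not> s \<le> min_dist C"
  then have stop_d: "stopping_ok n H (Suc (min_dist C))"
    using stopping_ok_antimono[OF stop] by simp
  obtain c where c: "c \<in> C" "True \<in> set c" "weight c = min_dist C"
    using min_dist_attained[OF linear_code_finite[OF lin] nonzero] by blast
  have lc: "length c = n" using c(1) linear_codeD(1)[OF lin] by blast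
  let ?S = "{i. i < n \<and> c ! i}"
  have "?S \<subseteq> {..<n}" by auto
  moreover have "?S \<noteq> {}" using c(2) lc by (auto simp: in_set_conv_nth)
  moreover have "card ?S < Suc (min_dist C)" using c(3) lc by (simp add: weight_def)
  ultimately obtain h where h: "h \<in> set H" and card_1: "card {i \<in> ?S. h ! i} = 1"
    using stop_d[unfolded stopping_ok_def, rule_format, of ?S] by blast
  have "{i \<in> ?S. h ! i} = {i. i < length c \<and> c ! i \<and> h ! i}" using lc by auto
  then have "inner_gf2 c h" using card_1 by (simp add: inner_gf2_def)
  moreover have "h \<in> dual_code n C" using parity_check_rows_in_dual_code[OF H] h by blast
  ultimately show False using c(1) by (simp add: dual_code_def)
qed

lemma stopping_distance_eq_min_dist_iff:
  assumes "parity_check n C H" and "linear_code n C" and "\<exists>u\<in>C. True \<in> set u"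
  shows "stopping_distance n H = min_dist C \<longleftrightarrow> stopping_ok n H (min_dist C)"
proof
  have bound: "stopping_ok n H s \<Longrightarrow> s \<le> min_dist C" for s
    using stopping_ok_le_min_dist[OF assms] .
  show "stopping_ok n H (min_dist C)" if "stopping_distance n H = min_dist C"
  proof -
    have "stopping_ok n H (stopping_distance n H)"
      unfolding stopping_distance_def
      by (rule GreatestI_nat[of _ 0 "min_dist C"]) (auto simp: stopping_ok_def bound)
    then show ?thesis using that by simp
  qed
  show "stopping_distance n H = min_dist C" if "stopping_ok n H (min_dist C)"
    unfolding stopping_distance_def using that bound by (rule Greatest_equality)
qed

lemma stopping_ok_of_dual_code:
  assumes lin: "linear_code n C" and H: "set H = dual_code n C"
  shows "stopping_ok n H (min_dist C)"
  unfolding stopping_ok_def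
proof (intro allI impI)
  fix S assume S: "S \<subseteq> {..<n} \<and> S \<noteq> {} \<and> card S < min_dist C"
  then obtain j where j: "j \<in> S" by blast
  define e where "e = map (\<lambda>i. i = j) [0..<n]"
  have "e \<in> restrict_vec S ` dual_code n C"
    using S j by (intro restrict_vec_dual_code_surj[OF lin]) (auto simp: e_def)
  then obtain v where v: "v \<in> dual_code n C" and e_eq: "e = restrict_vec S v" by blast
  have lv: "length v = n" using v dual_code_subset by blast
  have "v ! i = (i = j)" if i: "i \<in> S" for i
  proof -
    have "i < n" using i S by auto
    then have "e ! i = restrict_vec S v ! i" using e_eq by simp
    then show ?thesis using \<open>i < n\<close> i lv by (simp add: e_def)
  qed
  then have "{i \<in> S. v ! i} = {j}" using j by auto
  then show "\<exists>h\<in>set H. card {i \<in> S. h ! i} = 1" using v H by (intro bexI[of _ v]) auto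
qed

text \<open>Without a parity-check matrix reaching the minimum distance, the \<open>LEAST\<close> in
  \<open>stopping_redundancy\<close> would be a junk value; the matrix of all dual codewords is one.\<close>

lemma stopping_redundancy_attained:
  assumes lin: "linear_code n C" and nonzero: "\<exists>u\<in>C. True \<in> set u"
  obtains H where "length H = stopping_redundancy n C" and "parity_check n C H"
    and "stopping_distance n H = min_dist C"
proof -
  define P where "P = (\<lambda>m. \<exists>H. length H = m \<and> parity_check n C H
    \<and> stopping_distance n H = min_dist C)"
  obtain H where H: "set H = dual_code n C"
    using finite_list[OF finite_subset[OF dual_code_subset finite_length_eq]] by blast
  have "parity_check n C H" using parity_check_of_dual_code[OF lin H] .
  moreover have "stopping_distance n H = min_dist C"
    using stopping_ok_of_dual_code[OF lin H]
      stopping_distance_eq_min_dist_iff[OF \<open>parity_check n C H\<close> lin nonzero] by simp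
  ultimately have "P (length H)" unfolding P_def by blast
  then have "P (Least P)" by (rule LeastI)
  moreover have "Least P = stopping_redundancy n C" by (simp add: P_def stopping_redundancy_def)
  ultimately show ?thesis using that unfolding P_def by auto
qed

lemma stopping_redundancy_le_length:
  assumes "parity_check n C H" and "stopping_distance n H = min_dist C"
  shows "stopping_redundancy n C \<le> length H"
  unfolding stopping_redundancy_def by (rule Least_le) (use assms in blast)

section \<open>Direct sums of codes\<close>

definition direct_sum :: "bool list set \<Rightarrow> bool list set \<Rightarrow> bool list set" where
  "direct_sum A B = {u @ v | u v. u \<in> A \<and> v \<in> B}"

lemma ball_direct_sum: "(\<forall>c\<in>direct_sum A B. P c) \<longleftrightarrow> (\<forall>u\<in>A. \<forall>v\<in>B. P (u @ v))"
  by (auto simp: direct_sum_def)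

lemma direct_sum_nonzero:
  "\<exists>u\<in>C1. True \<in> set u \<Longrightarrow> zero_vec n2 \<in> C2 \<Longrightarrow> \<exists>u\<in>direct_sum C1 C2. True \<in> set u"
  by (force simp: direct_sum_def)

lemma linear_code_direct_sum:
  assumes lin1: "linear_code n1 C1" and lin2: "linear_code n2 C2"
  shows "linear_code (n1 + n2) (direct_sum C1 C2)"
  unfolding linear_code_def
proof (intro conjI ballI)
  show "direct_sum C1 C2 \<subseteq> {u. length u = n1 + n2}"
    using linear_codeD(1)[OF lin1] linear_codeD(1)[OF lin2]
    by (auto simp: direct_sum_def subset_iff)
  show "zero_vec (n1 + n2) \<in> direct_sum C1 C2"
    using linear_codeD(2)[OF lin1] linear_codeD(2)[OF lin2]
    by (auto simp: direct_sum_def zero_vec_add)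
  fix a b assume "a \<in> direct_sum C1 C2" "b \<in> direct_sum C1 C2"
  then obtain u v u' v' where ab: "a = u @ v" "b = u' @ v'"
    and in_C: "u \<in> C1" "v \<in> C2" "u' \<in> C1" "v' \<in> C2"
    by (auto simp: direct_sum_def)
  have "length u = length u'" using in_C linear_codeD(1)[OF lin1] by auto
  then have "vec_add a b = vec_add u u' @ vec_add v v'" using ab by (simp add: vec_add_append)
  moreover have "vec_add u u' \<in> C1" "vec_add v v' \<in> C2"
    using in_C linear_codeD(3)[OF lin1] linear_codeD(3)[OF lin2] by auto
  ultimately show "vec_add a b \<in> direct_sum C1 C2" by (auto simp: direct_sum_def)
qed

lemma card_direct_sum:
  assumes "C1 \<subseteq> {u. length u = n1}"
  shows "card (direct_sum C1 C2) = card C1 * card C2"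
proof -
  have "direct_sum C1 C2 = (\<lambda>(u, v). u @ v) ` (C1 \<times> C2)"
    by (auto simp: direct_sum_def)
  moreover have "inj_on (\<lambda>(u, v). u @ v) (C1 \<times> C2)"
    using assms by (auto intro!: inj_onI simp: subset_iff append_eq_append_conv)
  ultimately show ?thesis by (simp add: card_image card_cartesian_product)
qed

lemma min_dist_direct_sum:
  assumes lin1: "linear_code n1 C1" and lin2: "linear_code n2 C2"
    and nonzero1: "\<exists>u\<in>C1. True \<in> set u" and nonzero2: "\<exists>u\<in>C2. True \<in> set u"
  shows "min_dist (direct_sum C1 C2) = min (min_dist C1) (min_dist C2)"
proof -
  have fin1: "finite C1" and fin2: "finite C2"
    using linear_code_finite[OF lin1] linear_code_finite[OF lin2] .
  have fin: "finite (direct_sum C1 C2)"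
    using linear_code_finite[OF linear_code_direct_sum[OF lin1 lin2]] .
  have lower: "min (min_dist C1) (min_dist C2) \<le> weight c"
    if c_in: "c \<in> direct_sum C1 C2" and c_nonzero: "True \<in> set c" for c
  proof -
    obtain u v where c: "c = u @ v" "u \<in> C1" "v \<in> C2"
      using c_in unfolding direct_sum_def by blast
    have "True \<in> set u \<or> True \<in> set v" using c_nonzero c(1) by simp
    then have "min_dist C1 \<le> weight u \<or> min_dist C2 \<le> weight v"
      using min_dist_le_weight[OF fin1 c(2)] min_dist_le_weight[OF fin2 c(3)] by blast
    then show ?thesis using c(1) by (auto simp: weight_append)
  qed
  obtain c1 where c1: "c1 \<in> C1" "True \<in> set c1" "weight c1 = min_dist C1"
    using min_dist_attained[OF fin1 nonzero1] .
  obtain c2 where c2: "c2 \<in> C2" "True \<in> set c2" "weight c2 = min_dist C2"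
    using min_dist_attained[OF fin2 nonzero2] .
  show ?thesis
  proof (cases "min_dist C1 \<le> min_dist C2")
    case True
    have "c1 @ zero_vec n2 \<in> direct_sum C1 C2"
      using c1(1) linear_codeD(2)[OF lin2] by (auto simp: direct_sum_def)
    then show ?thesis
      by (rule min_dist_eqI[OF fin _ _ _ lower]) (use c1 True in \<open>auto simp: weight_append\<close>)
  next
    case False
    have "zero_vec n1 @ c2 \<in> direct_sum C1 C2"
      using c2(1) linear_codeD(2)[OF lin1] by (auto simp: direct_sum_def)
    then show ?thesis
      by (rule min_dist_eqI[OF fin _ _ _ lower]) (use c2 False in \<open>auto simp: weight_append\<close>)
  qed
qed

lemma dual_code_direct_sum:
  assumes lin1: "linear_code n1 C1" and lin2: "linear_code n2 C2"
  shows "dual_code (n1 + n2) (direct_sum C1 C2)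
    = direct_sum (dual_code n1 C1) (dual_code n2 C2)"
proof -
  have len1: "C1 \<subseteq> {u. length u = n1}" and len2: "C2 \<subseteq> {u. length u = n2}"
    using linear_codeD(1)[OF lin1] linear_codeD(1)[OF lin2] .
  have len: "direct_sum C1 C2 \<subseteq> {u. length u = n1 + n2}"
    using linear_codeD(1)[OF linear_code_direct_sum[OF lin1 lin2]] .
  have zero1: "zero_vec n1 \<in> C1" and zero2: "zero_vec n2 \<in> C2"
    using linear_codeD(2)[OF lin1] linear_codeD(2)[OF lin2] .
  have dual_append: "a @ b \<in> dual_code (n1 + n2) (direct_sum C1 C2) \<longleftrightarrow>
      a \<in> dual_code n1 C1 \<and> b \<in> dual_code n2 C2"
    if la: "length a = n1" and lb: "length b = n2" for a b
  proof -
    have "\<not> gf2_dot (u @ v) (a @ b) \<longleftrightarrow> gf2_dot u a = gf2_dot v b" if "u \<in> C1" for u v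
      using that len1 la by (auto simp: gf2_dot_append)
    then have "(\<forall>c\<in>direct_sum C1 C2. \<not> gf2_dot c (a @ b)) \<longleftrightarrow>
        (\<forall>u\<in>C1. \<forall>v\<in>C2. gf2_dot u a = gf2_dot v b)"
      by (simp add: ball_direct_sum)
    also have "\<dots> \<longleftrightarrow> (\<forall>u\<in>C1. \<not> gf2_dot u a) \<and> (\<forall>v\<in>C2. \<not> gf2_dot v b)"
    proof
      assume orth: "\<forall>u\<in>C1. \<forall>v\<in>C2. gf2_dot u a = gf2_dot v b"
      show "(\<forall>u\<in>C1. \<not> gf2_dot u a) \<and> (\<forall>v\<in>C2. \<not> gf2_dot v b)"
        using orth[rule_format, OF _ zero2] orth[rule_format, OF zero1] by simp
    qed simp
    finally show ?thesis
      using la lb by (simp add: mem_dual_code_iff[OF len] mem_dual_code_iff[OF len1]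
          mem_dual_code_iff[OF len2])
  qed
  show ?thesis
  proof (intro set_eqI iffI)
    fix w assume w: "w \<in> dual_code (n1 + n2) (direct_sum C1 C2)"
    then have "length w = n1 + n2" using dual_code_subset by blast
    then have "take n1 w \<in> dual_code n1 C1 \<and> drop n1 w \<in> dual_code n2 C2"
      using w dual_append[of "take n1 w" "drop n1 w"] by simp
    then show "w \<in> direct_sum (dual_code n1 C1) (dual_code n2 C2)"
      unfolding direct_sum_def
      by (intro CollectI exI[of _ "take n1 w"] exI[of _ "drop n1 w"]) simp
  next
    fix w assume "w \<in> direct_sum (dual_code n1 C1) (dual_code n2 C2)"
    then obtain a b where w: "w = a @ b" and a: "a \<in> dual_code n1 C1"
      and b: "b \<in> dual_code n2 C2"
      unfolding direct_sum_def by blast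
    have "length a = n1" "length b = n2" using a b dual_code_subset by blast+
    then show "w \<in> dual_code (n1 + n2) (direct_sum C1 C2)"
      using dual_append a b w by simp
  qed
qed

definition block_diag :: "nat \<Rightarrow> nat \<Rightarrow> bool list list \<Rightarrow> bool list list \<Rightarrow> bool list list" where
  "block_diag n1 n2 H1 H2 = map (\<lambda>h. h @ zero_vec n2) H1 @ map (\<lambda>h. zero_vec n1 @ h) H2"

lemma length_block_diag: "length (block_diag n1 n2 H1 H2) = length H1 + length H2"
  by (simp add: block_diag_def)

lemma row_span_block_diag:
  assumes len1: "\<And>h. h \<in> set H1 \<Longrightarrow> length h = n1"
    and len2: "\<And>h. h \<in> set H2 \<Longrightarrow> length h = n2"
  shows "row_span (n1 + n2) (block_diag n1 n2 H1 H2)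
    = direct_sum (row_span n1 H1) (row_span n2 H2)"
proof (intro set_eqI iffI)
  fix w assume "w \<in> row_span (n1 + n2) (block_diag n1 n2 H1 H2)"
  then show "w \<in> direct_sum (row_span n1 H1) (row_span n2 H2)"
  proof induction
    case zero
    then show ?case by (auto simp: direct_sum_def zero_vec_add intro: row_span.zero)
  next
    case (add r v)
    then obtain a b where v: "v = a @ b" and a: "a \<in> row_span n1 H1" and b: "b \<in> row_span n2 H2"
      by (auto simp: direct_sum_def)
    have la: "length a = n1" using row_span_length[OF a len1] .
    have lb: "length b = n2" using row_span_length[OF b len2] .
    from add(1) consider h where "h \<in> set H1" "r = h @ zero_vec n2"
      | h where "h \<in> set H2" "r = zero_vec n1 @ h"
      by (auto simp: block_diag_def)
    then show ?case
    proof cases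
      case 1
      then have "vec_add r v = vec_add h a @ b"
        using v la lb len1 by (simp add: vec_add_append)
      moreover have "vec_add h a \<in> row_span n1 H1" using 1(1) a by (rule row_span.add)
      ultimately show ?thesis using b by (auto simp: direct_sum_def)
    next
      case 2
      then have "vec_add r v = a @ vec_add h b"
        using v la lb len2 by (simp add: vec_add_append)
      moreover have "vec_add h b \<in> row_span n2 H2" using 2(1) b by (rule row_span.add)
      ultimately show ?thesis using a by (auto simp: direct_sum_def)
    qed
  qed
next
  let ?H = "block_diag n1 n2 H1 H2"
  have lin: "linear_code (n1 + n2) (row_span (n1 + n2) ?H)"
    using len1 len2 by (intro linear_code_row_span) (auto simp: block_diag_def)
  have pad_right: "a @ zero_vec n2 \<in> row_span (n1 + n2) ?H" if "a \<in> row_span n1 H1" for a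
    using that
  proof induction
    case zero
    then show ?case by (simp add: zero_vec_add[symmetric] row_span.zero)
  next
    case (add h a)
    have "h @ zero_vec n2 \<in> set ?H" using add(1) by (simp add: block_diag_def)
    from row_span.add[OF this add(3)] show ?case
      using len1[OF add(1)] row_span_length[OF add(2) len1] by (simp add: vec_add_append)
  qed
  have pad_left: "zero_vec n1 @ b \<in> row_span (n1 + n2) ?H" if "b \<in> row_span n2 H2" for b
    using that
  proof induction
    case zero
    then show ?case by (simp add: zero_vec_add[symmetric] row_span.zero)
  next
    case (add h b)
    have "zero_vec n1 @ h \<in> set ?H" using add(1) by (simp add: block_diag_def)
    from row_span.add[OF this add(3)] show ?case
      using len2[OF add(1)] row_span_length[OF add(2) len2] by (simp add: vec_add_append)
  qed
  fix w assume "w \<in> direct_sum (row_span n1 H1) (row_span n2 H2)"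
  then obtain a b where w: "w = a @ b" and a: "a \<in> row_span n1 H1" and b: "b \<in> row_span n2 H2"
    unfolding direct_sum_def by blast
  have "w = vec_add (a @ zero_vec n2) (zero_vec n1 @ b)"
    using w row_span_length[OF a len1] row_span_length[OF b len2] by (simp add: vec_add_append)
  then show "w \<in> row_span (n1 + n2) ?H"
    using linear_codeD(3)[OF lin pad_right[OF a] pad_left[OF b]] by simp
qed

lemma parity_check_block_diag:
  assumes lin1: "linear_code n1 C1" and lin2: "linear_code n2 C2"
    and H1: "parity_check n1 C1 H1" and H2: "parity_check n2 C2 H2"
  shows "parity_check (n1 + n2) (direct_sum C1 C2) (block_diag n1 n2 H1 H2)"
proof -
  have len1: "\<And>h. h \<in> set H1 \<Longrightarrow> length h = n1"
    and len2: "\<And>h. h \<in> set H2 \<Longrightarrow> length h = n2"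
    using H1 H2 by (auto simp: parity_check_def)
  have "row_span (n1 + n2) (block_diag n1 n2 H1 H2) = dual_code (n1 + n2) (direct_sum C1 C2)"
    using row_span_block_diag[OF len1 len2] dual_code_direct_sum[OF lin1 lin2] H1 H2
    by (simp add: parity_check_def)
  then show ?thesis
    using len1 len2 by (auto simp: parity_check_def block_diag_def)
qed

lemma card_nth_append_zero_vec:
  assumes "length h = n1" and "S \<subseteq> {..<n1 + n2}"
  shows "card {i \<in> S. (h @ zero_vec n2) ! i} = card {i \<in> S \<inter> {..<n1}. h ! i}"
proof -
  have "(h @ zero_vec n2) ! i = (i < n1 \<and> h ! i)" if "i \<in> S" for i
    using that assms by (auto simp: nth_append zero_vec_def)
  then show ?thesis by (intro arg_cong[where f = card]) auto
qed

lemma card_nth_zero_vec_append: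
  "card {i \<in> S. (zero_vec n1 @ h) ! i} = card {i. n1 + i \<in> S \<and> h ! i}"
proof -
  have "{i \<in> S. (zero_vec n1 @ h) ! i} = (\<lambda>i. n1 + i) ` {i. n1 + i \<in> S \<and> h ! i}"
  proof (intro set_eqI iffI)
    fix x assume x: "x \<in> {i \<in> S. (zero_vec n1 @ h) ! i}"
    then have "n1 \<le> x" by (auto simp: nth_append zero_vec_def split: if_splits)
    then show "x \<in> (\<lambda>i. n1 + i) ` {i. n1 + i \<in> S \<and> h ! i}"
      using x by (auto simp: nth_append zero_vec_def image_iff intro!: exI[of _ "x - n1"])
  qed (auto simp: nth_append zero_vec_def)
  then show ?thesis by (simp add: card_image)
qed

lemma stopping_ok_block_diag:
  assumes len1: "\<And>h. h \<in> set H1 \<Longrightarrow> length h = n1"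
    and stop1: "stopping_ok n1 H1 d1" and stop2: "stopping_ok n2 H2 d2"
  shows "stopping_ok (n1 + n2) (block_diag n1 n2 H1 H2) (min d1 d2)"
  unfolding stopping_ok_def
proof (intro allI impI)
  fix S assume S: "S \<subseteq> {..<n1 + n2} \<and> S \<noteq> {} \<and> card S < min d1 d2"
  have fin: "finite S" using S finite_subset by blast
  show "\<exists>h\<in>set (block_diag n1 n2 H1 H2). card {i \<in> S. h ! i} = 1"
  proof (cases "S \<inter> {..<n1} = {}")
    case False
    have "card (S \<inter> {..<n1}) \<le> card S" using fin by (intro card_mono) auto
    then obtain h where h: "h \<in> set H1" and "card {i \<in> S \<inter> {..<n1}. h ! i} = 1"
      using stop1[unfolded stopping_ok_def, rule_format, of "S \<inter> {..<n1}"] S False by auto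
    then have "card {i \<in> S. (h @ zero_vec n2) ! i} = 1"
      using card_nth_append_zero_vec[OF len1[OF h]] S by simp
    then show ?thesis using h by (auto simp: block_diag_def)
  next
    case True
    let ?S2 = "{i. n1 + i \<in> S}"
    have "(\<lambda>i. n1 + i) ` ?S2 \<subseteq> S" by auto
    then have "card ?S2 \<le> card S"
      using fin card_mono card_image[of "\<lambda>i. n1 + i" ?S2] by (metis inj_on_add)
    moreover have "?S2 \<subseteq> {..<n2}" using S by auto
    moreover have "?S2 \<noteq> {}"
    proof -
      obtain x where x: "x \<in> S" using S by blast
      then have "n1 \<le> x" using True by auto
      then have "x - n1 \<in> ?S2" using x by simp
      then show ?thesis by blast
    qed
    ultimately obtain h where h: "h \<in> set H2" and "card {i \<in> ?S2. h ! i} = 1"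
      using stop2[unfolded stopping_ok_def, rule_format, of ?S2] S by auto
    then have "card {i \<in> S. (zero_vec n1 @ h) ! i} = 1"
      using card_nth_zero_vec_append[of S n1 h] by (simp add: conj_commute)
    then show ?thesis using h by (auto simp: block_diag_def)
  qed
qed

lemma is_code_direct_sum:
  assumes "is_code n1 k1 d1 C1" and "is_code n2 k2 d2 C2"
  shows "is_code (n1 + n2) (k1 + k2) (min d1 d2) (direct_sum C1 C2)"
proof -
  have lin1: "linear_code n1 C1" and nonzero1: "\<exists>u\<in>C1. True \<in> set u"
    and lin2: "linear_code n2 C2" and nonzero2: "\<exists>u\<in>C2. True \<in> set u"
    using assms by (auto simp: is_code_def)
  have "card (direct_sum C1 C2) = 2 ^ (k1 + k2)"
    using card_direct_sum[OF linear_codeD(1)[OF lin1]] assms by (simp add: is_code_def power_add)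
  then show ?thesis
    using linear_code_direct_sum[OF lin1 lin2] min_dist_direct_sum[OF lin1 lin2 nonzero1 nonzero2]
      direct_sum_nonzero[OF nonzero1 linear_codeD(2)[OF lin2]] assms
    by (simp add: is_code_def)
qed

lemma stopping_redundancy_direct_sum_le:
  assumes lin1: "linear_code n1 C1" and nonzero1: "\<exists>u\<in>C1. True \<in> set u"
    and lin2: "linear_code n2 C2" and nonzero2: "\<exists>u\<in>C2. True \<in> set u"
  shows "stopping_redundancy (n1 + n2) (direct_sum C1 C2)
    \<le> stopping_redundancy n1 C1 + stopping_redundancy n2 C2"
proof -
  obtain H1 where len_H1: "length H1 = stopping_redundancy n1 C1"
    and H1: "parity_check n1 C1 H1" and sd1: "stopping_distance n1 H1 = min_dist C1"
    using stopping_redundancy_attained[OF lin1 nonzero1] .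
  obtain H2 where len_H2: "length H2 = stopping_redundancy n2 C2"
    and H2: "parity_check n2 C2 H2" and sd2: "stopping_distance n2 H2 = min_dist C2"
    using stopping_redundancy_attained[OF lin2 nonzero2] .
  let ?C = "direct_sum C1 C2" and ?H = "block_diag n1 n2 H1 H2"
  have H: "parity_check (n1 + n2) ?C ?H" using parity_check_block_diag[OF lin1 lin2 H1 H2] .
  have "stopping_ok n1 H1 (min_dist C1)" and "stopping_ok n2 H2 (min_dist C2)"
    using sd1 sd2 stopping_distance_eq_min_dist_iff[OF H1 lin1 nonzero1]
      stopping_distance_eq_min_dist_iff[OF H2 lin2 nonzero2] by simp_all
  then have "stopping_ok (n1 + n2) ?H (min_dist ?C)"
    using stopping_ok_block_diag H1 min_dist_direct_sum[OF lin1 lin2 nonzero1 nonzero2]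
    by (simp add: parity_check_def)
  moreover have "linear_code (n1 + n2) ?C" using linear_code_direct_sum[OF lin1 lin2] .
  moreover have "\<exists>u\<in>?C. True \<in> set u"
    using direct_sum_nonzero[OF nonzero1 linear_codeD(2)[OF lin2]] .
  ultimately have "stopping_distance (n1 + n2) ?H = min_dist ?C"
    using stopping_distance_eq_min_dist_iff[OF H] by blast
  then have "stopping_redundancy (n1 + n2) ?C \<le> length ?H"
    using stopping_redundancy_le_length[OF H] by blast
  then show ?thesis using len_H1 len_H2 by (simp add: length_block_diag)
qed

theorem theorem7:
  assumes "is_code n1 k1 d1 C1" and "is_code n2 k2 d2 C2"
    and "C3 = {u @ v | u v. u \<in> C1 \<and> v \<in> C2}"
  shows "is_code (n1 + n2) (k1 + k2) (min d1 d2) C3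
    \<and> stopping_redundancy (n1 + n2) C3 \<le> stopping_redundancy n1 C1 + stopping_redundancy n2 C2"
proof -
  have C3: "C3 = direct_sum C1 C2" using assms(3) by (simp add: direct_sum_def)
  have "linear_code n1 C1" "\<exists>u\<in>C1. True \<in> set u" "linear_code n2 C2" "\<exists>u\<in>C2. True \<in> set u"
    using assms(1,2) by (auto simp: is_code_def)
  then show ?thesis
    using is_code_direct_sum[OF assms(1,2)] stopping_redundancy_direct_sum_le C3 by simp
qed

end
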